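(* Fix $s,s'\in S$ and $a\in Act(s)$ with interface function $I_{s,a}$. Let $(\omega_1,\dots,\omega_M)\in\Omega^M$ be $M\in\mathbb{N}$ i.i.d. samples from $\mathbb{P}$, let $F_i=F(\mathcal{T}^{-1}(s),a,\omega_i)$, and define $$\check M=|\{i\in\{1,\dots,M\}: F_i\subseteq\mathcal{T}^{-1}(s')\}|,\qquad \hat M=|\{i\in\{1,\dots,M\}: F_i\cap\mathcal{T}^{-1}(s')\ne\emptyset\}|.$$ For $\beta\in(0,1)$ let $\check P_{lb}=0$ if $\check M=0$, and otherwise let $\check P_{lb}$ be the solution of $\frac{\beta}{2}=\sum_{\ell=\check M}^{M}\binom{M}{\ell}\check P_{lb}^{\ell}(1-\check P_{lb})^{M-\ell}$; let $\hat P_{ub}=1$ if $\hat M=M$, and otherwise let $\hat P_{ub}$ be the solution of $\frac{\beta}{2}=\sum_{\ell=0}^{\hat M}\binom{M}{\ell}\hat P_{ub}^{\ell}(1-\hat P_{ub})^{M-\ell}$. Then $$\mathbb{P}^M\Big\{(\omega_1,\dots,\omega_M)\in\Omega^M:\ \check P_{lb}\le\check p(s,a,s')\ \wedge\ \hat p(s,a,s')\le\hat P_{ub}\Big\}\ge 1-\beta.$$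
   Context: System: $x_{k+1}=f(x_k,u_k,\eta_k)$ with $x_k\in\mathcal{X}\subset\mathbb{R}^n$ compact, $u_k\in\mathcal{U}\subseteq\mathbb{R}^m$, $\eta_k:\Omega\to\mathcal{W}\subseteq\mathbb{R}^p$ i.i.d. on $(\Omega,\mathcal{F},\mathbb{P})$, $f:\mathcal{X}\times\mathcal{U}\times\mathcal{W}\to\mathcal{X}$; $\eta(\omega)$ denotes a noise realisation. $\mathcal{X}$ is partitioned into disjoint convex polytopes $R_1,\dots,R_v$, $R_\star=\mathbb{R}^n\setminus\mathcal{X}$, abstract states $S=\{s_1,\dots,s_v,s_\star\}$, abstraction map $\mathcal{T}:\mathbb{R}^n\to S$ with $\mathcal{T}(x)=s_i\iff x\in R_i$, $\mathcal{T}^{-1}(s)$ the region of $s$. $\bar{\mathbf u}=\{\bar u_1,\dots,\bar u_J\}\subset\mathcal{U}$ is a finite set of representative inputs; $Act$ is a finite action set with enabled actions $Act(s)$, and for $a\in Act(s)$ the interface function is $I_{s,a}:\mathcal{T}^{-1}(s)\to\bar{\mathbf u}$. Forward reachable set: $F(X,a,\omega)=\{f(x,u,\eta(\omega)): x\in X,\ u=I_{\mathcal{T}(x),a}(x)\}$. For compact $X'$: $\psi(x,X',a)=\mathbb{P}\{\omega: f(x,I_{\mathcal{T}(x),a}(x),\eta(\omega))\in X'\}$, and $\check p(s,a,s')=\min_{x\in\mathcal{T}^{-1}(s)}\psi(x,\mathcal{T}^{-1}(s'),a)$, $\hat p(s,a,s')=\max_{x\in\mathcal{T}^{-1}(s)}\psi(x,\mathcal{T}^{-1}(s'),a)$.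 *)

theory Defs
  imports "HOL-Probability.Probability"
begin

text \<open>Abstract states: Reg i stands for s_i (i in 1..v), Star for the sink state s_star.\<close>
datatype abs_state = Reg nat | Star

definition abs_states :: "nat \<Rightarrow> abs_state set" where
  "abs_states v = Reg ` {1..v} \<union> {Star}"

text \<open>Region of an abstract state (inverse image under the abstraction map).\<close>
fun region :: "(nat \<Rightarrow> 'x set) \<Rightarrow> 'x set \<Rightarrow> abs_state \<Rightarrow> 'x set" where
  "region R X (Reg i) = R i"
| "region R X Star = - X"

definition absmap :: "(nat \<Rightarrow> 'x set) \<Rightarrow> nat \<Rightarrow> 'x set \<Rightarrow> 'x \<Rightarrow> abs_state" where
  "absmap R v X x = (if (\<exists>i\<in>{1..v}. x \<in> R i) then Reg (THE i. i \<in> {1..v} \<and> x \<in> R i) else Star)"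

definition convex_polytope :: "'x::euclidean_space set \<Rightarrow> bool" where
  "convex_polytope P \<longleftrightarrow> bounded P \<and>
     (\<exists>H. finite H \<and> P = \<Inter> H \<and>
        (\<forall>h\<in>H. \<exists>c b. h = {x. c \<bullet> x \<le> b} \<or> h = {x. c \<bullet> x < b}))"

definition imdp_system ::
  "'x::euclidean_space set \<Rightarrow> 'u::euclidean_space set \<Rightarrow> 'w::euclidean_space set \<Rightarrow>
   ('x \<Rightarrow> 'u \<Rightarrow> 'w \<Rightarrow> 'x) \<Rightarrow> (nat \<Rightarrow> 'x set) \<Rightarrow> nat \<Rightarrow> 'u set \<Rightarrow>
   'act set \<Rightarrow> (abs_state \<Rightarrow> 'act set) \<Rightarrow> (abs_state \<Rightarrow> 'act \<Rightarrow> 'x \<Rightarrow> 'u) \<Rightarrow>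
   'o measure \<Rightarrow> ('o \<Rightarrow> 'w) \<Rightarrow> bool" where
  "imdp_system X U W f R v ubar Acts Act I P \<eta> \<longleftrightarrow>
     compact X
   \<and> (\<forall>x\<in>X. \<forall>u\<in>U. \<forall>w\<in>W. f x u w \<in> X)
   \<and> (\<forall>i\<in>{1..v}. convex_polytope (R i) \<and> R i \<noteq> {})
   \<and> (\<forall>i\<in>{1..v}. \<forall>j\<in>{1..v}. i \<noteq> j \<longrightarrow> R i \<inter> R j = {})
   \<and> (\<Union>i\<in>{1..v}. R i) = X
   \<and> finite ubar \<and> ubar \<subseteq> U
   \<and> finite Acts \<and> (\<forall>s\<in>abs_states v. Act s \<subseteq> Acts)
   \<and> (\<forall>s\<in>abs_states v. \<forall>a\<in>Act s. \<forall>x\<in>region R X s. I s a x \<in> ubar)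
   \<and> prob_space P
   \<and> \<eta> \<in> borel_measurable P
   \<and> (\<forall>\<omega>\<in>space P. \<eta> \<omega> \<in> W)"

definition fwd :: "('x \<Rightarrow> 'u \<Rightarrow> 'w \<Rightarrow> 'x) \<Rightarrow> (abs_state \<Rightarrow> 'act \<Rightarrow> 'x \<Rightarrow> 'u) \<Rightarrow>
    ('x \<Rightarrow> abs_state) \<Rightarrow> ('o \<Rightarrow> 'w) \<Rightarrow> 'x set \<Rightarrow> 'act \<Rightarrow> 'o \<Rightarrow> 'x set" where
  "fwd f I T \<eta> Y a \<omega> = {f x (I (T x) a x) (\<eta> \<omega>) | x. x \<in> Y}"

definition psi :: "'o measure \<Rightarrow> ('x \<Rightarrow> 'u \<Rightarrow> 'w \<Rightarrow> 'x) \<Rightarrow> (abs_state \<Rightarrow> 'act \<Rightarrow> 'x \<Rightarrow> 'u) \<Rightarrow>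
    ('x \<Rightarrow> abs_state) \<Rightarrow> ('o \<Rightarrow> 'w) \<Rightarrow> 'x \<Rightarrow> 'x set \<Rightarrow> 'act \<Rightarrow> real" where
  "psi P f I T \<eta> x Y a = measure P {\<omega> \<in> space P. f x (I (T x) a x) (\<eta> \<omega>) \<in> Y}"

definition cp_lower :: "nat \<Rightarrow> nat \<Rightarrow> real \<Rightarrow> real" where
  "cp_lower M k \<beta> = (if k = 0 then 0 else
     (THE p. 0 \<le> p \<and> p \<le> 1 \<and>
        \<beta> / 2 = (\<Sum>l = k..M. real (M choose l) * p ^ l * (1 - p) ^ (M - l))))"

definition cp_upper :: "nat \<Rightarrow> nat \<Rightarrow> real \<Rightarrow> real" where
  "cp_upper M k \<beta> = (if k = M then 1 else
     (THE p. 0 \<le> p \<and> p \<le> 1 \<and>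
        \<beta> / 2 = (\<Sum>l = 0..k. real (M choose l) * p ^ l * (1 - p) ^ (M - l))))"

end

theory Submission
  imports Defs
begin

text \<open>Every sample whose reachable set lies inside (meets) the target region witnesses that
  \<open>f x (I x) \<eta>\<close> lands there for every (some) initial state \<open>x\<close>. Hence the probability \<open>q\<^sub>c\<close>
  of the first event bounds all \<open>\<psi>(x)\<close> from below and the probability \<open>q\<^sub>h\<close> of the second
  bounds them from above. The two counts are binomially distributed with parameters \<open>q\<^sub>c\<close> and
  \<open>q\<^sub>h\<close>, and the Clopper--Pearson bounds are chosen so that, by monotonicity of the binomial
  tails in the success probability, each of them fails to cover its parameter with probability
  at most \<open>\<beta>/2\<close>; a union bound finishes the proof.\<close>

definition binom_prob :: "nat \<Rightarrow> nat \<Rightarrow> real \<Rightarrow> real" where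
  "binom_prob n l p = real (n choose l) * p ^ l * (1 - p) ^ (n - l)"

definition binom_tail :: "nat \<Rightarrow> nat \<Rightarrow> real \<Rightarrow> real" where
  "binom_tail n k p = (\<Sum>l = k..n. binom_prob n l p)"

lemma binom_prob_nonneg: "0 \<le> p \<Longrightarrow> p \<le> 1 \<Longrightarrow> 0 \<le> binom_prob n l p"
  unfolding binom_prob_def by simp

lemma binom_prob_Suc:
  "binom_prob (Suc n) l p = (1 - p) * binom_prob n l p + (if l = 0 then 0 else p * binom_prob n (l - 1) p)"
proof (cases l)
  case 0 then show ?thesis by (simp add: binom_prob_def)
next
  case (Suc m)
  consider "m < n" | "m = n" | "n < m" by linarith
  then show ?thesis
  proof cases
    case 1
    then have "Suc n - Suc m = Suc (n - Suc m)" "n - m = Suc (n - Suc m)" by auto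
    then show ?thesis using Suc by (simp add: binom_prob_def algebra_simps)
  qed (use Suc in \<open>simp_all add: binom_prob_def algebra_simps binomial_eq_0\<close>)
qed

lemma sum_binom_prob: "(\<Sum>l = 0..n. binom_prob n l p) = 1"
proof -
  have "(p + (1 - p)) ^ n = (\<Sum>l\<le>n. real (n choose l) * p ^ l * (1 - p) ^ (n - l))"
    by (rule binomial_ring)
  then show ?thesis by (simp add: binom_prob_def atLeast0AtMost)
qed

lemma sum_binom_prob_atMost:
  assumes "k \<le> n"
  shows "(\<Sum>l = 0..k. binom_prob n l p) = 1 - binom_tail n (Suc k) p"
proof -
  have "(\<Sum>l = 0..n. binom_prob n l p) = (\<Sum>l = 0..k. binom_prob n l p) + binom_tail n (Suc k) p"
    using sum.ub_add_nat[of 0 k "\<lambda>l. binom_prob n l p" "n - k"] assms by (simp add: binom_tail_def)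
  then show ?thesis by (simp add: sum_binom_prob)
qed

lemma has_real_derivative_binom_prob:
  assumes "1 \<le> l" "l \<le> n"
  shows "(binom_prob n l has_real_derivative
           real n * (binom_prob (n - 1) (l - 1) p - binom_prob (n - 1) l p)) (at p)"
proof -
  have d: "(binom_prob n l has_real_derivative real (n choose l) *
      (real l * p ^ (l - 1) * (1 - p) ^ (n - l) - real (n - l) * p ^ l * (1 - p) ^ (n - l - 1))) (at p)"
    unfolding binom_prob_def by (auto intro!: derivative_eq_intros simp: algebra_simps)
  have e1: "real (n choose l) * real l = real n * real ((n - 1) choose (l - 1))"
    using times_binomial_minus1_eq[of l n] assms by (simp flip: of_nat_mult add: mult.commute)
  have e2: "real (n choose l) * real (n - l) = real n * real ((n - 1) choose l)"
    using binomial_absorb_comp[of n l] by (simp flip: of_nat_mult add: mult.commute)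
  have "real (n choose l) *
      (real l * p ^ (l - 1) * (1 - p) ^ (n - l) - real (n - l) * p ^ l * (1 - p) ^ (n - l - 1))
      = (real (n choose l) * real l) * p ^ (l - 1) * (1 - p) ^ (n - l)
        - (real (n choose l) * real (n - l)) * p ^ l * (1 - p) ^ (n - l - 1)"
    by (simp add: algebra_simps)
  also have "\<dots> = real n * (binom_prob (n - 1) (l - 1) p - binom_prob (n - 1) l p)"
    unfolding e1 e2 binom_prob_def using assms by (simp add: algebra_simps)
  finally have "real (n choose l) *
      (real l * p ^ (l - 1) * (1 - p) ^ (n - l) - real (n - l) * p ^ l * (1 - p) ^ (n - l - 1))
      = real n * (binom_prob (n - 1) (l - 1) p - binom_prob (n - 1) l p)" .
  with d show ?thesis by simp
qed

text \<open>The derivative of the tail telescopes to a single binomial term.\<close>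
lemma has_real_derivative_binom_tail:
  assumes "1 \<le> k" "k \<le> Suc n"
  shows "(binom_tail n k has_real_derivative real n * binom_prob (n - 1) (k - 1) p) (at p)"
  using assms(2)
proof (induction k rule: inc_induct)
  case base
  have "binom_tail n (Suc n) = (\<lambda>_. 0)" by (simp add: binom_tail_def fun_eq_iff)
  moreover have "real n * binom_prob (n - 1) n p = 0" by (cases n) (auto simp: binom_prob_def)
  ultimately show ?case by (metis DERIV_const diff_Suc_1)
next
  case (step m)
  have "binom_tail n m = (\<lambda>p. binom_prob n m p + binom_tail n (Suc m) p)"
    using step(2) by (simp add: binom_tail_def fun_eq_iff sum.atLeast_Suc_atMost)
  moreover have "((\<lambda>p. binom_prob n m p + binom_tail n (Suc m) p) has_real_derivative
      real n * (binom_prob (n - 1) (m - 1) p - binom_prob (n - 1) m p)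
      + real n * binom_prob (n - 1) (Suc m - 1) p) (at p)"
    using step assms(1) by (intro derivative_intros has_real_derivative_binom_prob) auto
  ultimately show ?case by (simp add: algebra_simps)
qed

lemma isCont_binom_tail: "isCont (binom_tail n k) p"
proof (cases "1 \<le> k \<and> k \<le> Suc n")
  case True
  then show ?thesis using has_real_derivative_binom_tail DERIV_isCont by blast
next
  case False
  then have "binom_tail n k = (\<lambda>p. if k = 0 then \<Sum>l = 0..n. binom_prob n l p else 0)"
    by (auto simp: binom_tail_def fun_eq_iff)
  moreover have "isCont (\<lambda>p. \<Sum>l = 0..n. binom_prob n l p) p"
    unfolding binom_prob_def by (intro continuous_intros)
  ultimately show ?thesis by (cases "k = 0") auto
qed

lemma binom_tail_at_0: "1 \<le> k \<Longrightarrow> binom_tail n k 0 = 0"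
  unfolding binom_tail_def binom_prob_def by (intro sum.neutral) auto

lemma binom_tail_at_1:
  assumes "k \<le> n"
  shows "binom_tail n k 1 = 1"
proof -
  have "binom_tail n k 1 = (\<Sum>l = k..n. if l = n then 1 else 0)"
    unfolding binom_tail_def binom_prob_def by (intro sum.cong) auto
  with assms show ?thesis by simp
qed

lemma binom_tail_strict_mono:
  assumes "1 \<le> k" "k \<le> n" "0 \<le> p" "p < p'" "p' \<le> 1"
  shows "binom_tail n k p < binom_tail n k p'"
proof (rule DERIV_pos_imp_increasing_open[OF assms(4)])
  fix x assume "p < x" "x < p'"
  then have "0 < real n * binom_prob (n - 1) (k - 1) x"
    using assms by (auto simp: binom_prob_def)
  then show "\<exists>y. (binom_tail n k has_real_derivative y) (at x) \<and> 0 < y"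
    using has_real_derivative_binom_tail[of k n x] assms by auto
qed (simp add: continuous_at_imp_continuous_on isCont_binom_tail)

lemma binom_tail_mono:
  "1 \<le> k \<Longrightarrow> k \<le> n \<Longrightarrow> 0 \<le> p \<Longrightarrow> p \<le> p' \<Longrightarrow> p' \<le> 1 \<Longrightarrow> binom_tail n k p \<le> binom_tail n k p'"
  using binom_tail_strict_mono[of k n p p'] by (cases "p = p'") auto

lemma binom_tail_eq_unique:
  assumes "1 \<le> k" "k \<le> n" "0 < c" "c < 1"
  shows "\<exists>!p. 0 \<le> p \<and> p \<le> 1 \<and> c = binom_tail n k p"
proof -
  obtain x where x: "0 \<le> x" "x \<le> 1" "binom_tail n k x = c"
    using IVT[of "binom_tail n k" 0 c 1] assms binom_tail_at_0 binom_tail_at_1 isCont_binom_tail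
    by auto
  show ?thesis
  proof (rule ex1I[of _ x])
    fix y assume y: "0 \<le> y \<and> y \<le> 1 \<and> c = binom_tail n k y"
    show "y = x"
    proof (rule ccontr)
      assume "y \<noteq> x"
      then consider "y < x" | "x < y" by linarith
      then show False
        using binom_tail_strict_mono[OF assms(1,2)] x y by cases fastforce+
    qed
  qed (use x in auto)
qed

lemma cp_lower_spec:
  assumes "1 \<le> k" "k \<le> n" "0 < \<beta>" "\<beta> < 1"
  shows "0 \<le> cp_lower n k \<beta>" "cp_lower n k \<beta> \<le> 1" "binom_tail n k (cp_lower n k \<beta>) = \<beta> / 2"
proof -
  have "\<exists>!p. 0 \<le> p \<and> p \<le> 1 \<and> \<beta> / 2 = binom_tail n k p"
    using binom_tail_eq_unique[of k n "\<beta> / 2"] assms by auto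
  from theI'[OF this] show "0 \<le> cp_lower n k \<beta>" "cp_lower n k \<beta> \<le> 1"
      "binom_tail n k (cp_lower n k \<beta>) = \<beta> / 2"
    using assms unfolding cp_lower_def binom_tail_def binom_prob_def by auto
qed

lemma cp_upper_spec:
  assumes "k < n" "0 < \<beta>" "\<beta> < 1"
  shows "0 \<le> cp_upper n k \<beta>" "cp_upper n k \<beta> \<le> 1"
    "binom_tail n (Suc k) (cp_upper n k \<beta>) = 1 - \<beta> / 2"
proof -
  have lower_sum: "(\<Sum>l = 0..k. real (n choose l) * p ^ l * (1 - p) ^ (n - l))
      = 1 - binom_tail n (Suc k) p" for p
    using sum_binom_prob_atMost[of k n p] assms by (simp add: binom_prob_def)
  have "\<exists>!p. 0 \<le> p \<and> p \<le> 1 \<and> 1 - \<beta> / 2 = binom_tail n (Suc k) p"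
    using binom_tail_eq_unique assms by auto
  moreover have "(1 - \<beta> / 2 = t) = (\<beta> / 2 = 1 - t)" for t :: real by linarith
  ultimately have "\<exists>!p. 0 \<le> p \<and> p \<le> 1 \<and> \<beta> / 2 = 1 - binom_tail n (Suc k) p"
    by (simp only:)
  from theI'[OF this[folded lower_sum]]
  show "0 \<le> cp_upper n k \<beta>" "cp_upper n k \<beta> \<le> 1"
    "binom_tail n (Suc k) (cp_upper n k \<beta>) = 1 - \<beta> / 2"
    using assms unfolding cp_upper_def lower_sum by auto
qed

text \<open>The counts for which the Clopper--Pearson lower bound exceeds the true parameter \<open>q\<close>
  form an upper tail \<open>{k..n}\<close>, whose probability at \<open>q\<close> is at most its probability at
  \<open>cp_lower n k \<beta>\<close>, namely \<open>\<beta>/2\<close>.\<close>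
lemma sum_binom_prob_cp_lower_gt:
  assumes "0 \<le> q" "q \<le> 1" "0 < \<beta>" "\<beta> < 1"
  shows "(\<Sum>l \<in> {l \<in> {0..n}. q < cp_lower n l \<beta>}. binom_prob n l q) \<le> \<beta> / 2"
proof (cases "{l \<in> {0..n}. q < cp_lower n l \<beta>} = {}")
  case True
  then show ?thesis using assms by (simp only: sum.empty)
next
  case False
  define B where "B = {l \<in> {0..n}. q < cp_lower n l \<beta>}"
  define k where "k = Min B"
  have fin: "finite B" by (simp add: B_def)
  have kB: "k \<in> B" unfolding k_def using fin False by (intro Min_in) (auto simp: B_def)
  have B_sub: "B \<subseteq> {k..n}" using fin by (auto simp: k_def B_def)
  have k: "1 \<le> k" "k \<le> n"
    using kB assms by (auto simp: B_def cp_lower_def split: if_splits)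
  have "(\<Sum>l\<in>B. binom_prob n l q) \<le> binom_tail n k q"
    unfolding binom_tail_def using B_sub assms by (intro sum_mono2) (auto intro: binom_prob_nonneg)
  also have "\<dots> \<le> binom_tail n k (cp_lower n k \<beta>)"
    using cp_lower_spec[OF k assms(3,4)] k kB assms by (intro binom_tail_mono) (auto simp: B_def)
  also have "\<dots> = \<beta> / 2" using cp_lower_spec[OF k assms(3,4)] by simp
  finally show ?thesis by (simp add: B_def)
qed

lemma sum_binom_prob_cp_upper_lt:
  assumes "0 \<le> q" "q \<le> 1" "0 < \<beta>" "\<beta> < 1"
  shows "(\<Sum>l \<in> {l \<in> {0..n}. cp_upper n l \<beta> < q}. binom_prob n l q) \<le> \<beta> / 2"
proof (cases "{l \<in> {0..n}. cp_upper n l \<beta> < q} = {}")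
  case True
  then show ?thesis using assms by (simp only: sum.empty)
next
  case False
  define B where "B = {l \<in> {0..n}. cp_upper n l \<beta> < q}"
  define k where "k = Max B"
  have fin: "finite B" by (simp add: B_def)
  have kB: "k \<in> B" unfolding k_def using fin False by (intro Max_in) (auto simp: B_def)
  have B_sub: "B \<subseteq> {0..k}" using fin by (auto simp: k_def B_def)
  have k: "k < n"
    using kB assms by (cases "k = n") (auto simp: B_def cp_upper_def)
  have "(\<Sum>l\<in>B. binom_prob n l q) \<le> (\<Sum>l = 0..k. binom_prob n l q)"
    using B_sub assms by (intro sum_mono2) (auto intro: binom_prob_nonneg)
  also have "\<dots> = 1 - binom_tail n (Suc k) q" using k by (simp add: sum_binom_prob_atMost)
  also have "\<dots> \<le> 1 - binom_tail n (Suc k) (cp_upper n k \<beta>)"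
    using cp_upper_spec[OF k assms(3,4)] k kB assms
      binom_tail_mono[of "Suc k" n "cp_upper n k \<beta>" q] by (simp add: B_def)
  also have "\<dots> = \<beta> / 2" using cp_upper_spec[OF k assms(3,4)] by simp
  finally show ?thesis by (simp add: B_def)
qed

abbreviation hits :: "'i set \<Rightarrow> 'a set \<Rightarrow> ('i \<Rightarrow> 'a) \<Rightarrow> nat" where
  "hits J A \<omega> \<equiv> card {i \<in> J. \<omega> i \<in> A}"

lemma measurable_hits [measurable]:
  assumes "A \<in> sets P" "finite J"
  shows "hits J A \<in> measurable (PiM J (\<lambda>_. P)) (count_space UNIV)"
proof (subst measurable_count_space_eq2_countable, safe)
  fix l
  have "hits J A -` {l} \<inter> space (PiM J (\<lambda>_. P))
      = {\<omega> \<in> space (PiM J (\<lambda>_. P)). (\<Sum>i\<in>J. indicator A (\<omega> i) :: real) = real l}"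
    using \<open>finite J\<close> by (auto simp: indicator_def Int_def)
  also have "\<dots> \<in> sets (PiM J (\<lambda>_. P))"
    using assms by measurable
  finally show "hits J A -` {l} \<inter> space (PiM J (\<lambda>_. P)) \<in> sets (PiM J (\<lambda>_. P))" .
qed simp

lemma sets_hits_eq:
  "A \<in> sets P \<Longrightarrow> finite J \<Longrightarrow>
    {\<omega> \<in> space (PiM J (\<lambda>_. P)). hits J A \<omega> = l} \<in> sets (PiM J (\<lambda>_. P))"
  by measurable

lemma hits_Collect_space:
  "\<omega> \<in> space (PiM J (\<lambda>_. P)) \<Longrightarrow> hits J {x \<in> space P. Q x} \<omega> = card {i \<in> J. Q (\<omega> i)}"
  by (rule arg_cong[where f = card]) (auto simp: space_PiM)

text \<open>Integrating out a new coordinate \<open>j\<close>: the count stays \<open>l\<close> if the new sample misses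
  \<open>A\<close> and grows from \<open>l - 1\<close> if it hits \<open>A\<close>.\<close>
lemma nn_integral_hits_fun_upd:
  assumes P: "prob_space P" and A: "A \<in> sets P" and J: "finite J" "j \<notin> J"
    and \<omega>: "\<omega> \<in> space (PiM J (\<lambda>_. P))"
  shows "(\<integral>\<^sup>+ y. indicator {\<omega>' \<in> space (PiM (insert j J) (\<lambda>_. P)). hits (insert j J) A \<omega>' = l}
           (\<omega> (j := y)) \<partial>P)
    = ennreal (1 - measure P A) * indicator {\<omega> \<in> space (PiM J (\<lambda>_. P)). hits J A \<omega> = l} \<omega>
      + (if l = 0 then 0 else
         ennreal (measure P A) * indicator {\<omega> \<in> space (PiM J (\<lambda>_. P)). hits J A \<omega> = l - 1} \<omega>)"
    (is "?lhs = ?rhs")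
proof -
  interpret P: prob_space P by (rule P)
  have hits_upd: "hits (insert j J) A (\<omega> (j := y)) = hits J A \<omega> + (if y \<in> A then 1 else 0)"
    for y
  proof -
    have "{i \<in> insert j J. (\<omega> (j := y)) i \<in> A}
        = (if y \<in> A then insert j {i \<in> J. \<omega> i \<in> A} else {i \<in> J. \<omega> i \<in> A})"
      using J by auto
    then show ?thesis using J by simp
  qed
  have "?lhs = (\<integral>\<^sup>+ y. indicator {\<omega> \<in> space (PiM J (\<lambda>_. P)). hits J A \<omega> = l} \<omega> * indicator (space P - A) y
      + (if l = 0 then 0 else
         indicator {\<omega> \<in> space (PiM J (\<lambda>_. P)). hits J A \<omega> = l - 1} \<omega> * indicator A y) \<partial>P)"
  proof (rule nn_integral_cong)
    fix y assume y: "y \<in> space P"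
    then have "\<omega> (j := y) \<in> space (PiM (insert j J) (\<lambda>_. P))"
      using \<omega> J by (auto simp: space_PiM PiE_def extensional_def Pi_def)
    then show "indicator {\<omega>' \<in> space (PiM (insert j J) (\<lambda>_. P)). hits (insert j J) A \<omega>' = l}
        (\<omega> (j := y))
      = indicator {\<omega> \<in> space (PiM J (\<lambda>_. P)). hits J A \<omega> = l} \<omega> * indicator (space P - A) y
      + (if l = 0 then 0 else
         indicator {\<omega> \<in> space (PiM J (\<lambda>_. P)). hits J A \<omega> = l - 1} \<omega> * indicator A y :: ennreal)"
      using y \<omega> hits_upd by (auto simp: indicator_def)
  qed
  also have "\<dots> = indicator {\<omega> \<in> space (PiM J (\<lambda>_. P)). hits J A \<omega> = l} \<omega> * emeasure P (space P - A)
      + (if l = 0 then 0 else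
         indicator {\<omega> \<in> space (PiM J (\<lambda>_. P)). hits J A \<omega> = l - 1} \<omega> * emeasure P A)"
    using A by (subst nn_integral_add) (auto simp: nn_integral_cmult)
  also have "\<dots> = ?rhs"
    using P.prob_compl[OF A] by (simp add: P.emeasure_eq_measure mult.commute)
  finally show ?thesis .
qed

lemma emeasure_PiM_hits_eq:
  assumes P: "prob_space P" and A: "A \<in> sets P" and J: "finite J"
  shows "emeasure (PiM J (\<lambda>_. P)) {\<omega> \<in> space (PiM J (\<lambda>_. P)). hits J A \<omega> = l}
       = ennreal (binom_prob (card J) l (measure P A))"
  using J
proof (induction J arbitrary: l rule: finite_induct)
  case empty
  show ?case by (cases l) (auto simp: PiM_empty binom_prob_def)
next
  case (insert j J)
  interpret P: prob_space P by (rule P)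
  interpret PP: product_prob_space "\<lambda>_. P" by unfold_locales
  define q where "q = measure P A"
  define E where "E = (\<lambda>l. {\<omega> \<in> space (PiM J (\<lambda>_. P)). hits J A \<omega> = l})"
  have E_sets: "E k \<in> sets (PiM J (\<lambda>_. P))" for k
    unfolding E_def using A insert.hyps(1) by (rule sets_hits_eq)
  define E' where "E' = {\<omega> \<in> space (PiM (insert j J) (\<lambda>_. P)). hits (insert j J) A \<omega> = l}"
  have E'_sets: "E' \<in> sets (PiM (insert j J) (\<lambda>_. P))"
    unfolding E'_def using A insert.hyps by (intro sets_hits_eq) auto
  have "emeasure (PiM (insert j J) (\<lambda>_. P)) E' = (\<integral>\<^sup>+ \<omega>. indicator E' \<omega> \<partial>PiM (insert j J) (\<lambda>_. P))"
    using E'_sets by simp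
  also have "\<dots> = (\<integral>\<^sup>+ \<omega>. (\<integral>\<^sup>+ y. indicator E' (\<omega> (j := y)) \<partial>P) \<partial>PiM J (\<lambda>_. P))"
    using insert.hyps E'_sets by (intro PP.product_nn_integral_insert) auto
  also have "\<dots> = (\<integral>\<^sup>+ \<omega>. ennreal (1 - q) * indicator (E l) \<omega>
      + (if l = 0 then 0 else ennreal q * indicator (E (l - 1)) \<omega>) \<partial>PiM J (\<lambda>_. P))"
    unfolding E_def E'_def q_def
    by (intro nn_integral_cong) (rule nn_integral_hits_fun_upd[OF P A insert.hyps(1,2)])
  also have "\<dots> = ennreal (1 - q) * emeasure (PiM J (\<lambda>_. P)) (E l)
      + (if l = 0 then 0 else ennreal q * emeasure (PiM J (\<lambda>_. P)) (E (l - 1)))"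
    using E_sets by (subst nn_integral_add) (auto simp: nn_integral_cmult)
  also have "\<dots> = ennreal ((1 - q) * binom_prob (card J) l q
      + (if l = 0 then 0 else q * binom_prob (card J) (l - 1) q))"
    by (simp add: insert.IH E_def q_def ennreal_mult binom_prob_nonneg ennreal_plus)
  also have "\<dots> = ennreal (binom_prob (card (insert j J)) l q)"
    using insert.hyps by (simp add: binom_prob_Suc)
  finally show ?case by (simp add: E'_def q_def)
qed

lemma measure_PiM_hits_in:
  assumes P: "prob_space P" and A: "A \<in> sets P" and J: "finite J"
  shows "measure (PiM J (\<lambda>_. P)) {\<omega> \<in> space (PiM J (\<lambda>_. P)). Q (hits J A \<omega>)}
       = (\<Sum>l \<in> {l \<in> {0..card J}. Q l}. binom_prob (card J) l (measure P A))"
proof -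
  let ?N = "PiM J (\<lambda>_. P)"
  interpret N: prob_space ?N using P by (intro prob_space_PiM) auto
  define E where "E = (\<lambda>l. {\<omega> \<in> space ?N. hits J A \<omega> = l})"
  have "{\<omega> \<in> space ?N. Q (hits J A \<omega>)} = (\<Union>l \<in> {l \<in> {0..card J}. Q l}. E l)"
    using J by (auto simp: E_def intro: card_mono)
  moreover have "measure ?N (\<Union>l \<in> {l \<in> {0..card J}. Q l}. E l)
      = (\<Sum>l \<in> {l \<in> {0..card J}. Q l}. measure ?N (E l))"
    using A J by (intro measure_finite_Union) (auto simp: E_def disjoint_family_on_def)
  moreover have "measure ?N (E l) = binom_prob (card J) l (measure P A)" for l
    using emeasure_PiM_hits_eq[OF P A J, of l] P
    by (simp add: E_def N.emeasure_eq_measure binom_prob_nonneg prob_space.prob_le_1)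
  ultimately show ?thesis by simp
qed

lemma measure_PiM_cp_lower_gt:
  assumes "prob_space P" "A \<in> sets P" "finite J" "0 < \<beta>" "\<beta> < 1"
  shows "measure (PiM J (\<lambda>_. P))
      {\<omega> \<in> space (PiM J (\<lambda>_. P)). measure P A < cp_lower (card J) (hits J A \<omega>) \<beta>} \<le> \<beta> / 2"
  using measure_PiM_hits_in[OF assms(1-3), of "\<lambda>k. measure P A < cp_lower (card J) k \<beta>"]
    sum_binom_prob_cp_lower_gt[of "measure P A" \<beta> "card J"] assms
  by (simp add: prob_space.prob_le_1)

lemma measure_PiM_cp_upper_lt:
  assumes "prob_space P" "A \<in> sets P" "finite J" "0 < \<beta>" "\<beta> < 1"
  shows "measure (PiM J (\<lambda>_. P))
      {\<omega> \<in> space (PiM J (\<lambda>_. P)). cp_upper (card J) (hits J A \<omega>) \<beta> < measure P A} \<le> \<beta> / 2"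
  using measure_PiM_hits_in[OF assms(1-3), of "\<lambda>k. cp_upper (card J) k \<beta> < measure P A"]
    sum_binom_prob_cp_upper_lt[of "measure P A" \<beta> "card J"] assms
  by (simp add: prob_space.prob_le_1)

text \<open>The two counts need not be independent: a union bound over the two failure events suffices.\<close>
lemma clopper_pearson_two_sided:
  assumes P: "prob_space P" and A: "A\<^sub>c \<in> sets P" "A\<^sub>h \<in> sets P" and J: "finite J"
    and \<beta>: "0 < \<beta>" "\<beta> < 1"
    and lo: "measure P A\<^sub>c \<le> lo" and hi: "hi \<le> measure P A\<^sub>h"
  shows "1 - \<beta> \<le> measure (PiM J (\<lambda>_. P)) {\<omega> \<in> space (PiM J (\<lambda>_. P)).
      cp_lower (card J) (hits J A\<^sub>c \<omega>) \<beta> \<le> lo \<and> hi \<le> cp_upper (card J) (hits J A\<^sub>h \<omega>) \<beta>}"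
    (is "_ \<le> measure ?N ?E")
proof -
  interpret N: prob_space ?N using P by (intro prob_space_PiM) auto
  define B\<^sub>c where "B\<^sub>c = {\<omega> \<in> space ?N. measure P A\<^sub>c < cp_lower (card J) (hits J A\<^sub>c \<omega>) \<beta>}"
  define B\<^sub>h where "B\<^sub>h = {\<omega> \<in> space ?N. cp_upper (card J) (hits J A\<^sub>h \<omega>) \<beta> < measure P A\<^sub>h}"
  have [measurable]: "hits J A\<^sub>c \<in> measurable ?N (count_space UNIV)"
    "hits J A\<^sub>h \<in> measurable ?N (count_space UNIV)"
    using A J by (auto intro: measurable_hits)
  have "?E \<in> sets ?N" "B\<^sub>c \<in> sets ?N" "B\<^sub>h \<in> sets ?N"
    unfolding B\<^sub>c_def B\<^sub>h_def by measurable
  moreover have "space ?N - ?E \<subseteq> B\<^sub>c \<union> B\<^sub>h"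
    using lo hi by (auto simp: B\<^sub>c_def B\<^sub>h_def)
  ultimately have "1 - measure ?N ?E \<le> measure ?N B\<^sub>c + measure ?N B\<^sub>h"
    using N.prob_compl N.finite_measure_mono[of "space ?N - ?E" "B\<^sub>c \<union> B\<^sub>h"]
      measure_Un_le[of B\<^sub>c ?N B\<^sub>h] by fastforce
  moreover have "measure ?N B\<^sub>c \<le> \<beta> / 2" "measure ?N B\<^sub>h \<le> \<beta> / 2"
    unfolding B\<^sub>c_def B\<^sub>h_def
    by (intro measure_PiM_cp_lower_gt measure_PiM_cp_upper_lt P A J \<beta>)+
  ultimately show ?thesis by linarith
qed

lemma region_nonempty:
  assumes "imdp_system X U W f R v ubar Acts Act I P \<eta>" "s \<in> abs_states v"
  shows "region R X s \<noteq> {}"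
proof -
  from assms(2) consider i where "s = Reg i" "i \<in> {1..v}" | "s = Star"
    by (auto simp: abs_states_def)
  then show ?thesis
  proof cases
    case 2
    have "bounded X" using assms(1) by (simp add: imdp_system_def compact_imp_bounded)
    then have "X \<noteq> UNIV" by auto
    with 2 show ?thesis by auto
  qed (use assms(1) in \<open>simp add: imdp_system_def\<close>)
qed

lemma measure_fwd_subset_le_INF_psi:
  assumes "prob_space P" "Y \<noteq> {}"
    and "\<forall>x\<in>Y. {\<omega> \<in> space P. f x (I (T x) a x) (\<eta> \<omega>) \<in> Z} \<in> sets P"
  shows "measure P {\<omega> \<in> space P. fwd f I T \<eta> Y a \<omega> \<subseteq> Z} \<le> (INF x\<in>Y. psi P f I T \<eta> x Z a)"
proof (rule cINF_greatest[OF \<open>Y \<noteq> {}\<close>])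
  interpret prob_space P by fact
  fix x assume "x \<in> Y"
  then have "{\<omega> \<in> space P. fwd f I T \<eta> Y a \<omega> \<subseteq> Z} \<subseteq> {\<omega> \<in> space P. f x (I (T x) a x) (\<eta> \<omega>) \<in> Z}"
    by (auto simp: fwd_def)
  with assms(1,3) \<open>x \<in> Y\<close> show "measure P {\<omega> \<in> space P. fwd f I T \<eta> Y a \<omega> \<subseteq> Z} \<le> psi P f I T \<eta> x Z a"
    unfolding psi_def by (intro finite_measure_mono) auto
qed

lemma SUP_psi_le_measure_fwd_meets:
  assumes "prob_space P" "Y \<noteq> {}"
    and "{\<omega> \<in> space P. fwd f I T \<eta> Y a \<omega> \<inter> Z \<noteq> {}} \<in> sets P"
  shows "(SUP x\<in>Y. psi P f I T \<eta> x Z a) \<le> measure P {\<omega> \<in> space P. fwd f I T \<eta> Y a \<omega> \<inter> Z \<noteq> {}}"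
proof (rule cSUP_least[OF \<open>Y \<noteq> {}\<close>])
  interpret prob_space P by fact
  fix x assume "x \<in> Y"
  then have "{\<omega> \<in> space P. f x (I (T x) a x) (\<eta> \<omega>) \<in> Z} \<subseteq> {\<omega> \<in> space P. fwd f I T \<eta> Y a \<omega> \<inter> Z \<noteq> {}}"
    by (auto simp: fwd_def)
  with assms(1,3) show "psi P f I T \<eta> x Z a \<le> measure P {\<omega> \<in> space P. fwd f I T \<eta> Y a \<omega> \<inter> Z \<noteq> {}}"
    unfolding psi_def by (intro finite_measure_mono) auto
qed

theorem theorem2:
  fixes X :: "'x::euclidean_space set" and U :: "'u::euclidean_space set"
    and W :: "'w::euclidean_space set"
    and f :: "'x \<Rightarrow> 'u \<Rightarrow> 'w \<Rightarrow> 'x" and R :: "nat \<Rightarrow> 'x set" and v :: nat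
    and ubar :: "'u set" and Acts :: "'act set" and Act :: "abs_state \<Rightarrow> 'act set"
    and I :: "abs_state \<Rightarrow> 'act \<Rightarrow> 'x \<Rightarrow> 'u"
    and P :: "'o measure" and \<eta> :: "'o \<Rightarrow> 'w"
    and s s' :: abs_state and a :: 'act and M :: nat and \<beta> :: real
  assumes sys: "imdp_system X U W f R v ubar Acts Act I P \<eta>"
    and s: "s \<in> abs_states v" and s': "s' \<in> abs_states v" and a: "a \<in> Act s"
    and meas_psi: "\<forall>x\<in>region R X s.
      {\<omega> \<in> space P. f x (I (absmap R v X x) a x) (\<eta> \<omega>) \<in> region R X s'} \<in> sets P"
    and meas_sub: "{\<omega> \<in> space P.
      fwd f I (absmap R v X) \<eta> (region R X s) a \<omega> \<subseteq> region R X s'} \<in> sets P"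
    and meas_hit: "{\<omega> \<in> space P.
      fwd f I (absmap R v X) \<eta> (region R X s) a \<omega> \<inter> region R X s' \<noteq> {}} \<in> sets P"
    and \<beta>: "0 < \<beta>" "\<beta> < 1"
  shows "measure (PiM {1..M} (\<lambda>_. P))
    {\<omega>s \<in> space (PiM {1..M} (\<lambda>_. P)).
       cp_lower M (card {i \<in> {1..M}.
           fwd f I (absmap R v X) \<eta> (region R X s) a (\<omega>s i) \<subseteq> region R X s'}) \<beta>
         \<le> (INF x\<in>region R X s. psi P f I (absmap R v X) \<eta> x (region R X s') a)
     \<and> (SUP x\<in>region R X s. psi P f I (absmap R v X) \<eta> x (region R X s') a)
         \<le> cp_upper M (card {i \<in> {1..M}.
           fwd f I (absmap R v X) \<eta> (region R X s) a (\<omega>s i) \<inter> region R X s' \<noteq> {}}) \<beta>}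
    \<ge> 1 - \<beta>"
proof -
  interpret P: prob_space P using sys by (simp add: imdp_system_def)
  let ?T = "absmap R v X" and ?Y = "region R X s" and ?Z = "region R X s'"
  let ?A\<^sub>c = "{\<omega> \<in> space P. fwd f I ?T \<eta> ?Y a \<omega> \<subseteq> ?Z}"
  let ?A\<^sub>h = "{\<omega> \<in> space P. fwd f I ?T \<eta> ?Y a \<omega> \<inter> ?Z \<noteq> {}}"
  let ?N = "PiM {1..M} (\<lambda>_. P)"
  have Y: "?Y \<noteq> {}" by (rule region_nonempty[OF sys s])
  have hits_eq: "hits {1..M} ?A\<^sub>c \<omega>s = card {i \<in> {1..M}. fwd f I ?T \<eta> ?Y a (\<omega>s i) \<subseteq> ?Z}"
    "hits {1..M} ?A\<^sub>h \<omega>s = card {i \<in> {1..M}. fwd f I ?T \<eta> ?Y a (\<omega>s i) \<inter> ?Z \<noteq> {}}"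
    if "\<omega>s \<in> space ?N" for \<omega>s
    using that by (rule hits_Collect_space)+
  have "1 - \<beta> \<le> measure ?N {\<omega>s \<in> space ?N.
      cp_lower (card {1..M}) (hits {1..M} ?A\<^sub>c \<omega>s) \<beta> \<le> (INF x\<in>?Y. psi P f I ?T \<eta> x ?Z a)
    \<and> (SUP x\<in>?Y. psi P f I ?T \<eta> x ?Z a) \<le> cp_upper (card {1..M}) (hits {1..M} ?A\<^sub>h \<omega>s) \<beta>}"
    using P.prob_space_axioms meas_sub meas_hit \<beta>
      measure_fwd_subset_le_INF_psi[where f = f and I = I and T = ?T, OF P.prob_space_axioms Y meas_psi]
      SUP_psi_le_measure_fwd_meets[where f = f and I = I and T = ?T, OF P.prob_space_axioms Y meas_hit]
    by (intro clopper_pearson_two_sided) auto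
  then show ?thesis
    by (simp only: hits_eq card_atLeastAtMost diff_Suc_1 cong: conj_cong)
qed

end
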